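(* For all $\alpha,\beta,\epsilon>0$ there is an $(\epsilon,(1+\alpha)\epsilon+\beta)$-tolerant tester for (undirected) connectivity.
   Context: Model: graphs on $n$ vertices; $m$ is a fixed upper bound on the number of edges, $m=\Omega(n)$; access is via a neighbor oracle returning, for a vertex $v$, $\deg(v)$ or its $i$-th neighbor (one query each). $\mathrm{dist}(G_1,G_2)$ is the number of unordered pairs that are an edge in exactly one graph, divided by $m$; $G$ is $\epsilon$-close to a property $\mathcal{P}$ if $\min_{G'\in\mathcal{P}}\mathrm{dist}(G,G')\le\epsilon$ and $\epsilon$-far otherwise. An $(\epsilon_1,\epsilon_2)$-tolerant tester for $\mathcal{P}$ is a randomized algorithm with neighbor-oracle access to the input graph $G$ that makes $o(m)$ queries, accepts with probability $\ge 2/3$ if $G$ is $\epsilon_1$-close to $\mathcal{P}$, and accepts with probability $\le 1/3$ if $G$ is $\epsilon_2$-far from $\mathcal{P}$. *)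

theory Defs
  imports "HOL-Probability.Probability"
begin

definition is_graph :: "nat \<Rightarrow> nat set set \<Rightarrow> bool" where
  "is_graph n E \<longleftrightarrow> (\<forall>e\<in>E. \<exists>u v. u < n \<and> v < n \<and> u \<noteq> v \<and> e = {u, v})"

definition graph_connected :: "nat \<Rightarrow> nat set set \<Rightarrow> bool" where
  "graph_connected n E \<longleftrightarrow>
     (\<forall>u<n. \<forall>v<n. (u, v) \<in> {(x, y). {x, y} \<in> E}\<^sup>*)"

definition gdist :: "nat \<Rightarrow> nat set set \<Rightarrow> nat set set \<Rightarrow> real" where
  "gdist m E1 E2 = real (card ((E1 - E2) \<union> (E2 - E1))) / real m"

text \<open>eps-close to connectivity: some connected graph on the same vertex set
  is within distance eps (the set of such graphs is finite and nonempty, so this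
  is the same as the minimum distance being at most eps).\<close>

definition close_to_conn :: "nat \<Rightarrow> nat \<Rightarrow> real \<Rightarrow> nat set set \<Rightarrow> bool" where
  "close_to_conn n m eps E \<longleftrightarrow>
     (\<exists>E'. is_graph n E' \<and> graph_connected n E' \<and> gdist m E E' \<le> eps)"

text \<open>The oracle is given by adjacency lists: adj v lists the neighbours of v
  in an arbitrary order. deg(v) = length (adj v); the i-th neighbour (0-indexed)
  is adj v ! i, and an out-of-range neighbour query returns None.\<close>

definition valid_adj :: "nat \<Rightarrow> (nat \<Rightarrow> nat list) \<Rightarrow> bool" where
  "valid_adj n adj \<longleftrightarrow>
     (\<forall>v. distinct (adj v)) \<and>
     (\<forall>v. n \<le> v \<longrightarrow> adj v = []) \<and>
     (\<forall>v. set (adj v) \<subseteq> {..<n}) \<and>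
     (\<forall>v. v \<notin> set (adj v)) \<and>
     (\<forall>u v. u \<in> set (adj v) \<longleftrightarrow> v \<in> set (adj u))"

definition adj_edges :: "(nat \<Rightarrow> nat list) \<Rightarrow> nat set set" where
  "adj_edges adj = {{u, v} | u v. v \<in> set (adj u)}"

text \<open>A deterministic adaptive query algorithm is a decision tree: it either
  halts with an answer, or asks a degree query for a vertex, or asks for the
  i-th neighbour of a vertex, and continues depending on the answer.
  A randomized algorithm is a probability distribution over deterministic ones.\<close>

datatype qtree =
    Halt bool
  | QDeg nat "nat \<Rightarrow> qtree"
  | QNbr nat nat "nat option \<Rightarrow> qtree"

definition nbr_answer :: "(nat \<Rightarrow> nat list) \<Rightarrow> nat \<Rightarrow> nat \<Rightarrow> nat option" where
  "nbr_answer adj v i = (if i < length (adj v) then Some (adj v ! i) else None)"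

primrec run :: "(nat \<Rightarrow> nat list) \<Rightarrow> qtree \<Rightarrow> bool \<times> nat" where
  "run adj (Halt b) = (b, 0)"
| "run adj (QDeg v k) = (\<lambda>(b, c). (b, Suc c)) (run adj (k (length (adj v))))"
| "run adj (QNbr v i k) = (\<lambda>(b, c). (b, Suc c)) (run adj (k (nbr_answer adj v i)))"

definition accept_prob :: "qtree pmf \<Rightarrow> (nat \<Rightarrow> nat list) \<Rightarrow> real" where
  "accept_prob T adj = measure_pmf.prob T {t. fst (run adj t)}"

text \<open>Sublinearity o(m) is asymptotic in m, uniformly over the regime m = Omega(n),
  i.e. over m \<ge> c n for any fixed constant c > 0.\<close>

definition tolerant_conn_tester ::
  "real \<Rightarrow> real \<Rightarrow> (nat \<Rightarrow> nat \<Rightarrow> qtree pmf) \<Rightarrow> (nat \<Rightarrow> nat \<Rightarrow> nat) \<Rightarrow> bool" where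
  "tolerant_conn_tester eps1 eps2 T q \<longleftrightarrow>
     (\<forall>n m adj. valid_adj n adj \<longrightarrow> card (adj_edges adj) \<le> m \<longrightarrow>
        (\<forall>t\<in>set_pmf (T n m). snd (run adj t) \<le> q n m)) \<and>
     (\<forall>c>0. \<forall>\<delta>>0. \<exists>M. \<forall>n m. M \<le> m \<longrightarrow> c * real n \<le> real m \<longrightarrow>
        real (q n m) \<le> \<delta> * real m) \<and>
     (\<forall>n m adj. 0 < m \<longrightarrow> valid_adj n adj \<longrightarrow> card (adj_edges adj) \<le> m \<longrightarrow>
        (close_to_conn n m eps1 (adj_edges adj) \<longrightarrow> accept_prob (T n m) adj \<ge> 2/3) \<and>
        (\<not> close_to_conn n m eps2 (adj_edges adj) \<longrightarrow> accept_prob (T n m) adj \<le> 1/3))"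

end

theory Submission
  imports Defs
begin

text \<open>A graph with k connected components is at distance exactly (k - 1) / m from
  connectivity: an edge merges at most two components, and k - 1 edges joining one vertex to a
  representative of every other component connect the graph. So it suffices to estimate k up to
  an additive error small compared with (eps2 - eps1) m. Since k is the sum over all vertices v
  of 1 / |C(v)|, C(v) being the component of v, we drop the terms with |C(v)| > s, losing at
  most n / s, and estimate the rest from r uniformly sampled vertices, computing each term by a
  breadth-first search that stops after s vertices; Chebyshev's inequality controls the sampling
  error. Graphs with many more vertices than edges have many components and are rejected
  outright; otherwise n = O(m), so both errors, which are proportional to n, are small compared
  with m, while the number r (s + 1)^2 of queries does not depend on n or m.\<close>

datatype 'a query =
    Answer 'a
  | AskDeg nat "nat \<Rightarrow> 'a query"
  | AskNbr nat nat "nat option \<Rightarrow> 'a query"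

primrec query_bind :: "'a query \<Rightarrow> ('a \<Rightarrow> 'b query) \<Rightarrow> 'b query" where
  "query_bind (Answer a) f = f a"
| "query_bind (AskDeg v k) f = AskDeg v (\<lambda>d. query_bind (k d) f)"
| "query_bind (AskNbr v i k) f = AskNbr v i (\<lambda>w. query_bind (k w) f)"

primrec query_result :: "(nat \<Rightarrow> nat list) \<Rightarrow> 'a query \<Rightarrow> 'a" where
  "query_result adj (Answer a) = a"
| "query_result adj (AskDeg v k) = query_result adj (k (length (adj v)))"
| "query_result adj (AskNbr v i k) = query_result adj (k (nbr_answer adj v i))"

primrec query_cost :: "(nat \<Rightarrow> nat list) \<Rightarrow> 'a query \<Rightarrow> nat" where
  "query_cost adj (Answer a) = 0"
| "query_cost adj (AskDeg v k) = Suc (query_cost adj (k (length (adj v))))"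
| "query_cost adj (AskNbr v i k) = Suc (query_cost adj (k (nbr_answer adj v i)))"

lemma query_result_bind [simp]:
  "query_result adj (query_bind p f) = query_result adj (f (query_result adj p))"
  by (induction p) auto

lemma query_cost_bind [simp]:
  "query_cost adj (query_bind p f) = query_cost adj p + query_cost adj (f (query_result adj p))"
  by (induction p) auto

primrec qtree_of :: "bool query \<Rightarrow> qtree" where
  "qtree_of (Answer b) = Halt b"
| "qtree_of (AskDeg v k) = QDeg v (\<lambda>d. qtree_of (k d))"
| "qtree_of (AskNbr v i k) = QNbr v i (\<lambda>w. qtree_of (k w))"

lemma run_qtree_of: "run adj (qtree_of p) = (query_result adj p, query_cost adj p)"
  by (induction p) auto

primrec query_sum :: "('b \<Rightarrow> real query) \<Rightarrow> 'b list \<Rightarrow> real query" where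
  "query_sum f [] = Answer 0"
| "query_sum f (x # xs) =
     query_bind (f x) (\<lambda>a. query_bind (query_sum f xs) (\<lambda>b. Answer (a + b)))"

lemma query_result_sum: "query_result adj (query_sum f xs) = (\<Sum>x\<leftarrow>xs. query_result adj (f x))"
  by (induction xs) auto

lemma query_cost_sum: "query_cost adj (query_sum f xs) = (\<Sum>x\<leftarrow>xs. query_cost adj (f x))"
  by (induction xs) auto

primrec read_nbrs :: "nat \<Rightarrow> nat \<Rightarrow> nat list query" where
  "read_nbrs v 0 = Answer []"
| "read_nbrs v (Suc k) =
     query_bind (read_nbrs v k) (\<lambda>ns. AskNbr v k (\<lambda>w. Answer (ns @ [the w])))"

lemma query_result_read_nbrs:
  "k \<le> length (adj v) \<Longrightarrow> query_result adj (read_nbrs v k) = take k (adj v)"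
  by (induction k) (auto simp: nbr_answer_def take_Suc_conv_app_nth)

lemma query_cost_read_nbrs: "query_cost adj (read_nbrs v k) = k"
  by (induction k) auto

definition edge_rel :: "nat set set \<Rightarrow> (nat \<times> nat) set" where
  "edge_rel E = {(x, y). {x, y} \<in> E}"

definition component :: "nat set set \<Rightarrow> nat \<Rightarrow> nat set" where
  "component E v = (edge_rel E)\<^sup>* `` {v}"

definition num_components :: "nat \<Rightarrow> nat set set \<Rightarrow> nat" where
  "num_components n E = card (component E ` {..<n})"

lemma graph_connected_iff_edge_rel:
  "graph_connected n E \<longleftrightarrow> (\<forall>u<n. \<forall>v<n. (u, v) \<in> (edge_rel E)\<^sup>*)"
  by (simp add: graph_connected_def edge_rel_def)

lemma equiv_rtrancl_edge_rel: "equiv UNIV ((edge_rel E)\<^sup>*)"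
proof -
  have "sym (edge_rel E)" by (auto simp: edge_rel_def sym_def insert_commute)
  then show ?thesis by (simp add: equiv_def refl_rtrancl sym_rtrancl trans_rtrancl)
qed

lemma rtrancl_edge_rel_sym: "(u, v) \<in> (edge_rel E)\<^sup>* \<Longrightarrow> (v, u) \<in> (edge_rel E)\<^sup>*"
  using equiv_rtrancl_edge_rel by (meson equivE symD)

lemma component_eq_iff: "component E u = component E v \<longleftrightarrow> (u, v) \<in> (edge_rel E)\<^sup>*"
  unfolding component_def using equiv_class_eq_iff[OF equiv_rtrancl_edge_rel] by blast

lemma mem_component_iff: "u \<in> component E v \<longleftrightarrow> (v, u) \<in> (edge_rel E)\<^sup>*"
  by (simp add: component_def)

lemma component_self: "v \<in> component E v"
  by (simp add: mem_component_iff)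

lemma component_eq: "u \<in> component E v \<Longrightarrow> component E u = component E v"
  using component_eq_iff mem_component_iff rtrancl_edge_rel_sym by metis

lemma is_graph_edge_rel: "is_graph n E \<Longrightarrow> edge_rel E \<subseteq> {..<n} \<times> {..<n}"
  by (fastforce simp: is_graph_def edge_rel_def doubleton_eq_iff)

lemma is_graph_finite: "is_graph n E \<Longrightarrow> finite E"
  by (rule finite_subset[of _ "Pow {..<n}"]) (auto simp: is_graph_def)

lemma component_subset:
  assumes "is_graph n E" "v < n"
  shows "component E v \<subseteq> {..<n}"
proof
  fix u assume "u \<in> component E v"
  then have "(v, u) \<in> (edge_rel E)\<^sup>*" by (simp add: mem_component_iff)
  then show "u \<in> {..<n}"
    by (induction rule: rtrancl_induct) (use assms is_graph_edge_rel in auto)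
qed

lemma card_component_pos: "is_graph n E \<Longrightarrow> v < n \<Longrightarrow> 0 < card (component E v)"
  using component_self component_subset by (metis card_gt_0_iff empty_iff finite_lessThan finite_subset)

lemma sum_inverse_card_component:
  assumes "is_graph n E"
  shows "(\<Sum>v<n. 1 / real (card (component E v))) = real (num_components n E)"
proof -
  have fibre: "{u\<in>{..<n}. component E u = C} = C" if "C \<in> component E ` {..<n}" for C
    using that component_self component_eq component_subset[OF assms] by blast
  have "(\<Sum>v<n. 1 / real (card (component E v))) =
      (\<Sum>C\<in>component E ` {..<n}. \<Sum>u\<in>{u\<in>{..<n}. component E u = C}. 1 / real (card (component E u)))"
    by (rule sum.image_gen) simp
  also have "\<dots> = (\<Sum>C\<in>component E ` {..<n}. \<Sum>u\<in>C. 1 / real (card C))"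
    using fibre component_eq by (intro sum.cong refl) auto
  also have "\<dots> = (\<Sum>C\<in>component E ` {..<n}. 1)"
    by (intro sum.cong refl) (use card_component_pos[OF assms] in auto)
  finally show ?thesis by (simp add: num_components_def)
qed

lemma rtrancl_edge_rel_insert:
  assumes "(x, y) \<in> (edge_rel (insert {a, b} E))\<^sup>*"
  shows "(x, y) \<in> (edge_rel E)\<^sup>* \<or> (x, a) \<in> (edge_rel E)\<^sup>* \<or> (x, b) \<in> (edge_rel E)\<^sup>*"
  using assms
proof (induction rule: rtrancl_induct)
  case (step y z)
  then have "(y, z) \<in> edge_rel E \<or> y = a \<or> y = b"
    by (auto simp: edge_rel_def doubleton_eq_iff)
  with step.IH show ?case by (blast intro: rtrancl_into_rtrancl)
qed simp

lemma card_image_le_card_image: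
  assumes "finite A" "\<And>x y. x \<in> A \<Longrightarrow> y \<in> A \<Longrightarrow> g x = g y \<Longrightarrow> f x = f y"
  shows "card (f ` A) \<le> card (g ` A)"
proof -
  have "f x = f (inv_into A g (g x))" if "x \<in> A" for x
    using assms(2)[OF inv_into_into that, of "g x"] that by (simp add: f_inv_into_f)
  then have "f ` A = (f \<circ> inv_into A g) ` g ` A"
    by (auto simp: image_comp)
  then show ?thesis using assms(1) by (simp add: card_image_le)
qed

lemma num_components_insert_le:
  "num_components n E \<le> Suc (num_components n (insert {a, b} E))"
proof -
  let ?E' = "insert {a, b} E"
  define W where "W = {x\<in>{..<n}. component E x \<noteq> component E b}"
  have "num_components n E \<le> card (insert (component E b) (component E ` W))"
    unfolding num_components_def W_def by (intro card_mono) auto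
  also have "\<dots> \<le> Suc (card (component E ` W))"
    by (simp add: card_insert_if W_def)
  also have "card (component E ` W) \<le> card (component ?E' ` W)"
  proof (rule card_image_le_card_image)
    fix x y assume "x \<in> W" "y \<in> W" "component ?E' x = component ?E' y"
    then have xy: "(x, y) \<in> (edge_rel ?E')\<^sup>*" and yx: "(y, x) \<in> (edge_rel ?E')\<^sup>*"
      and "component E x \<noteq> component E b" "component E y \<noteq> component E b"
      by (auto simp: component_eq_iff W_def rtrancl_edge_rel_sym)
    then show "component E x = component E y"
      using rtrancl_edge_rel_insert[OF xy] rtrancl_edge_rel_insert[OF yx]
      unfolding component_eq_iff[symmetric] by argo
  qed (simp add: W_def)
  also have "card (component ?E' ` W) \<le> num_components n ?E'"
    unfolding num_components_def W_def by (intro card_mono) auto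
  finally show ?thesis by simp
qed

lemma num_components_union_le:
  assumes "finite F" "is_graph n (E \<union> F)"
  shows "num_components n E \<le> num_components n (E \<union> F) + card F"
  using assms
proof (induction F rule: finite_induct)
  case (insert e F)
  have "is_graph n (E \<union> F)" using insert.prems by (simp add: is_graph_def)
  moreover obtain a b where "e = {a, b}" using insert.prems by (auto simp: is_graph_def)
  ultimately show ?case
    using insert.IH insert.hyps num_components_insert_le[of n "E \<union> F" a b] by simp
qed simp

lemma num_components_empty: "num_components n {} = n"
proof -
  have "component {} v = {v}" for v by (simp add: component_def edge_rel_def)
  then show ?thesis by (simp add: num_components_def card_image)
qed

lemma num_components_lower_bound:
  assumes "is_graph n E"
  shows "n \<le> num_components n E + card E"
  using num_components_union_le[of E n "{}"] assms is_graph_finite[OF assms]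
  unfolding num_components_empty by simp

lemma num_components_connected:
  assumes "graph_connected n E" "0 < n"
  shows "num_components n E = 1"
proof -
  have same: "component E u = component E 0" if "u < n" for u
    using assms that by (simp add: graph_connected_iff_edge_rel component_eq_iff)
  have "component E ` {..<n} = {component E 0}"
  proof (intro equalityI subsetI)
    fix C assume "C \<in> component E ` {..<n}"
    then show "C \<in> {component E 0}" using same by blast
  qed (use assms(2) in simp)
  then show ?thesis by (simp add: num_components_def)
qed

lemma rtrancl_edge_rel_mono:
  "E \<subseteq> E' \<Longrightarrow> (x, y) \<in> (edge_rel E)\<^sup>* \<Longrightarrow> (x, y) \<in> (edge_rel E')\<^sup>*"
  using rtrancl_mono[of "edge_rel E" "edge_rel E'"] by (auto simp: edge_rel_def)

lemma graph_connected_if_reachable: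
  assumes "\<And>u. u < n \<Longrightarrow> (w, u) \<in> (edge_rel E)\<^sup>*"
  shows "graph_connected n E"
  unfolding graph_connected_iff_edge_rel using assms by (meson rtrancl_edge_rel_sym rtrancl_trans)

lemma connecting_edges_exist:
  assumes "is_graph n E" "0 < n"
  obtains F where "finite F" "card F + 1 \<le> num_components n E"
    "is_graph n (E \<union> F)" "graph_connected n (E \<union> F)"
proof -
  define Cs where "Cs = component E ` {..<n} - {component E 0}"
  define rep where "rep = inv_into {..<n} (component E)"
  define F where "F = (\<lambda>C. {0, rep C}) ` Cs"
  have rep: "rep C < n" "component E (rep C) = C" "rep C \<noteq> 0" if "C \<in> Cs" for C
  proof -
    have C: "C \<in> component E ` {..<n}" using that by (simp add: Cs_def)
    show "rep C < n" using inv_into_into[OF C] by (simp add: rep_def)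
    show rep_C: "component E (rep C) = C" using f_inv_into_f[OF C] by (simp add: rep_def)
    have "C \<noteq> component E 0" using that by (simp add: Cs_def)
    with rep_C show "rep C \<noteq> 0" by metis
  qed
  have "card F \<le> card Cs" unfolding F_def by (rule card_image_le) (simp add: Cs_def)
  also have "card Cs + 1 = num_components n E"
    using assms(2) card_Suc_Diff1[of "component E ` {..<n}" "component E 0"]
    by (simp add: Cs_def num_components_def)
  finally have "card F + 1 \<le> num_components n E" by simp
  moreover have "is_graph n F"
    unfolding is_graph_def F_def using rep(1,3) assms(2) by fastforce
  then have "is_graph n (E \<union> F)" using assms(1) unfolding is_graph_def by blast
  moreover have "(0, u) \<in> (edge_rel (E \<union> F))\<^sup>*" if "u < n" for u
  proof (cases "component E u = component E 0")
    case True
    then have "(0, u) \<in> (edge_rel E)\<^sup>*" using component_eq_iff rtrancl_edge_rel_sym by blast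
    then show ?thesis by (rule rtrancl_edge_rel_mono[rotated]) simp
  next
    case False
    then have C: "component E u \<in> Cs" using that by (simp add: Cs_def)
    have "(0, rep (component E u)) \<in> edge_rel (E \<union> F)"
      using C by (auto simp: edge_rel_def F_def)
    moreover have "(rep (component E u), u) \<in> (edge_rel E)\<^sup>*"
      using rep(2)[OF C] by (simp add: component_eq_iff)
    then have "(rep (component E u), u) \<in> (edge_rel (E \<union> F))\<^sup>*"
      by (rule rtrancl_edge_rel_mono[rotated]) simp
    ultimately show ?thesis by (rule converse_rtrancl_into_rtrancl)
  qed
  then have "graph_connected n (E \<union> F)" by (rule graph_connected_if_reachable)
  moreover have "finite F" by (simp add: F_def Cs_def)
  ultimately show thesis using that by blast
qed

lemma close_to_conn_iff_num_components:
  assumes "is_graph n E" "0 < n" "0 < m"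
  shows "close_to_conn n m eps E \<longleftrightarrow> real (num_components n E) - 1 \<le> eps * real m"
proof
  assume "close_to_conn n m eps E"
  then obtain E' where E': "is_graph n E'" "graph_connected n E'" "gdist m E E' \<le> eps"
    unfolding close_to_conn_def by blast
  let ?F = "E' - E"
  have "graph_connected n (E \<union> ?F)"
    using E'(2) rtrancl_edge_rel_mono[of E' "E \<union> ?F"] by (auto simp: graph_connected_iff_edge_rel)
  then have "num_components n (E \<union> ?F) = 1"
    using assms(2) by (rule num_components_connected)
  moreover have "is_graph n (E \<union> ?F)"
    using assms(1) E'(1) unfolding is_graph_def by blast
  ultimately have "num_components n E \<le> 1 + card ?F"
    using num_components_union_le[of ?F n E] is_graph_finite[OF E'(1)] by simp
  also have "card ?F \<le> card ((E - E') \<union> (E' - E))"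
    using is_graph_finite[OF E'(1)] is_graph_finite[OF assms(1)] by (intro card_mono) auto
  finally show "real (num_components n E) - 1 \<le> eps * real m"
    using E'(3) assms(3) by (simp add: gdist_def divide_le_eq)
next
  assume bound: "real (num_components n E) - 1 \<le> eps * real m"
  obtain F where F: "finite F" "card F + 1 \<le> num_components n E"
    "is_graph n (E \<union> F)" "graph_connected n (E \<union> F)"
    using connecting_edges_exist[OF assms(1,2)] .
  have "card ((E - (E \<union> F)) \<union> ((E \<union> F) - E)) \<le> card F"
    using F(1) by (intro card_mono) auto
  then have "gdist m E (E \<union> F) \<le> eps"
    using F(2) bound assms(3) by (simp add: gdist_def divide_le_eq)
  then show "close_to_conn n m eps E"
    unfolding close_to_conn_def using F(3,4) by blast
qed

lemma close_to_conn_no_vertices: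
  assumes "is_graph 0 E" "0 \<le> eps"
  shows "close_to_conn 0 m eps E"
proof -
  have "E = {}" using assms(1) by (auto simp: is_graph_def)
  then show ?thesis
    using assms(2) unfolding close_to_conn_def
    by (intro exI[of _ "{}"]) (simp add: is_graph_def graph_connected_def gdist_def)
qed

lemma not_close_to_conn_many_vertices:
  assumes "is_graph n E" "card E \<le> m" "0 < m" "0 \<le> eps" "(eps + 1) * real m + 1 < real n"
  shows "\<not> close_to_conn n m eps E"
proof -
  have "0 \<le> (eps + 1) * real m" using assms(4) by simp
  then have "0 < n" using assms(5) by linarith
  have "real n \<le> real (num_components n E) + real m"
    using num_components_lower_bound[OF assms(1)] assms(2) by linarith
  then show ?thesis
    using close_to_conn_iff_num_components[OF assms(1) \<open>0 < n\<close> assms(3)] assms(5)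
    by (simp add: algebra_simps)
qed

lemma adj_edges_iff:
  assumes "valid_adj n adj"
  shows "{x, y} \<in> adj_edges adj \<longleftrightarrow> y \<in> set (adj x)"
  using assms unfolding adj_edges_def valid_adj_def by (auto simp: doubleton_eq_iff)

lemma edge_rel_adj_edges:
  "valid_adj n adj \<Longrightarrow> edge_rel (adj_edges adj) = {(x, y). y \<in> set (adj x)}"
  by (auto simp: edge_rel_def adj_edges_iff)

lemma is_graph_adj_edges:
  assumes "valid_adj n adj"
  shows "is_graph n (adj_edges adj)"
  unfolding is_graph_def
proof
  fix e assume "e \<in> adj_edges adj"
  then obtain u w where e: "e = {u, w}" "w \<in> set (adj u)" unfolding adj_edges_def by blast
  then have "u \<in> set (adj w)" "u \<noteq> w" using assms unfolding valid_adj_def by blast+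
  moreover have "\<And>x y. x \<in> set (adj y) \<Longrightarrow> x < n" using assms unfolding valid_adj_def by blast
  ultimately show "\<exists>u v. u < n \<and> v < n \<and> u \<noteq> v \<and> e = {u, v}" using e by blast
qed

lemma adj_subset_component:
  assumes "valid_adj n adj" "x \<in> component (adj_edges adj) v"
  shows "set (adj x) \<subseteq> component (adj_edges adj) v"
  using assms by (auto simp: mem_component_iff edge_rel_adj_edges intro: rtrancl_into_rtrancl)

lemma component_subset_adj_closed:
  assumes "valid_adj n adj" "v \<in> A" "\<And>x. x \<in> A \<Longrightarrow> set (adj x) \<subseteq> A"
  shows "component (adj_edges adj) v \<subseteq> A"
proof
  fix u assume "u \<in> component (adj_edges adj) v"
  then have "(v, u) \<in> {(x, y). y \<in> set (adj x)}\<^sup>*"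
    by (simp add: mem_component_iff edge_rel_adj_edges[OF assms(1)])
  then show "u \<in> A" by (induction rule: rtrancl_induct) (use assms(2,3) in auto)
qed

definition capped_inverse_size :: "nat \<Rightarrow> nat set set \<Rightarrow> nat \<Rightarrow> real" where
  "capped_inverse_size s E v =
     (if card (component E v) \<le> s then 1 / real (card (component E v)) else 0)"

lemma capped_inverse_size_eq_0:
  assumes "finite (component E v)" "distinct xs" "set xs \<subseteq> component E v" "s < length xs"
  shows "capped_inverse_size s E v = 0"
  using assms card_mono[OF assms(1,3)] by (simp add: capped_inverse_size_def distinct_card)

primrec bounded_bfs :: "nat \<Rightarrow> nat \<Rightarrow> nat list \<Rightarrow> nat list \<Rightarrow> real query" where
  "bounded_bfs s 0 S U = Answer 0"
| "bounded_bfs s (Suc f) S U = (case U of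
      [] \<Rightarrow> Answer (1 / real (length S))
    | x # U' \<Rightarrow> AskDeg x (\<lambda>d.
        if s < d then Answer 0
        else query_bind (read_nbrs x d) (\<lambda>ns.
          let new = filter (\<lambda>y. y \<notin> set S) ns in
          if s < length S + length new then Answer 0
          else bounded_bfs s f (S @ new) (U' @ new))))"

lemma query_cost_bounded_bfs: "query_cost adj (bounded_bfs s f S U) \<le> f * (s + 1)"
proof (induction f arbitrary: S U)
  case (Suc f)
  show ?case
  proof (cases U)
    case (Cons x U')
    let ?new = "filter (\<lambda>y. y \<notin> set S) (adj x)"
    have "query_cost adj (bounded_bfs s f (S @ ?new) (U' @ ?new)) \<le> f * (s + 1)"
      by (rule Suc.IH)
    then show ?thesis using Cons by (auto simp: Let_def query_result_read_nbrs query_cost_read_nbrs)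
  qed simp
qed simp

definition bfs_invariant ::
  "nat \<Rightarrow> (nat \<Rightarrow> nat list) \<Rightarrow> nat \<Rightarrow> nat \<Rightarrow> nat list \<Rightarrow> nat list \<Rightarrow> bool" where
  "bfs_invariant s adj v f S U \<longleftrightarrow>
     distinct S \<and> distinct U \<and> set U \<subseteq> set S \<and> v \<in> set S \<and>
     set S \<subseteq> component (adj_edges adj) v \<and> (\<forall>x\<in>set S - set U. set (adj x) \<subseteq> set S) \<and>
     length S \<le> s \<and> s + 1 \<le> length S - length U + f"

lemma bfs_invariant_step:
  assumes inv: "bfs_invariant s adj v (Suc f) S (x # U')" and va: "valid_adj n adj"
    and new: "new = filter (\<lambda>y. y \<notin> set S) (adj x)" and small: "length S + length new \<le> s"
  shows "bfs_invariant s adj v f (S @ new) (U' @ new)"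
proof -
  let ?C = "component (adj_edges adj) v"
  have x: "x \<in> set S" "x \<in> ?C" using inv by (auto simp: bfs_invariant_def)
  have "distinct new" using va by (simp add: new valid_adj_def)
  moreover have "set new \<subseteq> ?C" using adj_subset_component[OF va x(2)] by (auto simp: new)
  moreover have "length (x # U') \<le> length S"
    using inv by (metis bfs_invariant_def card_mono distinct_card finite_set)
  moreover have "set (adj y) \<subseteq> set (S @ new)" if "y \<in> set (S @ new) - set (U' @ new)" for y
  proof (cases "y = x")
    case False
    then have "y \<in> set S - set (x # U')" using that by (auto simp: new)
    then show ?thesis using inv by (auto simp: bfs_invariant_def)
  qed (auto simp: new)
  ultimately show ?thesis
    using inv small by (auto simp: bfs_invariant_def new)
qed

text \<open>When the queue is empty the visited list is closed under neighbours, hence a whole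
  component; a vertex of degree d, or a visited list, witnesses a component of at least
  d + 1, respectively that many, vertices.\<close>

lemma query_result_bounded_bfs:
  assumes "valid_adj n adj" "v < n" "bfs_invariant s adj v f S U"
  shows "query_result adj (bounded_bfs s f S U) = capped_inverse_size s (adj_edges adj) v"
  using assms(3)
proof (induction f arbitrary: S U)
  case 0
  then have "s + 1 \<le> length S - length U" "length S \<le> s" by (simp_all add: bfs_invariant_def)
  then show ?case by linarith
next
  case (Suc f)
  let ?C = "component (adj_edges adj) v"
  have finC: "finite ?C"
    using component_subset[OF is_graph_adj_edges[OF assms(1)] assms(2)] finite_subset by blast
  have S: "distinct S" "set S \<subseteq> ?C" "length S \<le> s" "v \<in> set S"
    using Suc.prems by (auto simp: bfs_invariant_def)
  show ?case
  proof (cases U)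
    case Nil
    have "?C \<subseteq> set S"
      using Suc.prems Nil component_subset_adj_closed[OF assms(1), of v "set S"]
      by (auto simp: bfs_invariant_def)
    then have "card ?C = length S" using S(1,2) distinct_card by fastforce
    then show ?thesis using Nil S(3) by (simp add: capped_inverse_size_def)
  next
    case (Cons x U')
    have x: "x \<in> ?C" using Cons Suc.prems by (auto simp: bfs_invariant_def)
    define new where "new = filter (\<lambda>y. y \<notin> set S) (adj x)"
    show ?thesis
    proof (cases "s < length (adj x)")
      case True
      have "distinct (x # adj x)" "set (x # adj x) \<subseteq> ?C"
        using assms(1) adj_subset_component[OF assms(1) x] x by (auto simp: valid_adj_def)
      then show ?thesis using Cons True capped_inverse_size_eq_0[OF finC, of "x # adj x"] by simp
    next
      case False
      have "distinct (S @ new)" "set (S @ new) \<subseteq> ?C"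
        using S assms(1) adj_subset_component[OF assms(1) x] by (auto simp: new_def valid_adj_def)
      then show ?thesis
        using Cons False capped_inverse_size_eq_0[OF finC, of "S @ new"] Suc.IH bfs_invariant_step[OF _ assms(1) new_def] Suc.prems
        by (auto simp: Let_def query_result_read_nbrs query_cost_read_nbrs new_def[symmetric])
    qed
  qed
qed

definition size_probe :: "nat \<Rightarrow> nat \<Rightarrow> real query" where
  "size_probe s v = bounded_bfs s (Suc s) [v] [v]"

lemma query_result_size_probe:
  assumes "valid_adj n adj" "v < n" "0 < s"
  shows "query_result adj (size_probe s v) = capped_inverse_size s (adj_edges adj) v"
proof -
  have "bfs_invariant s adj v (Suc s) [v] [v]"
    using assms(3) by (simp add: bfs_invariant_def component_self)
  then show ?thesis
    unfolding size_probe_def by (rule query_result_bounded_bfs[OF assms(1,2)])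
qed

lemma query_cost_size_probe: "query_cost adj (size_probe s v) \<le> (s + 1)\<^sup>2"
  using query_cost_bounded_bfs[of adj s "Suc s" "[v]" "[v]"]
  by (simp add: size_probe_def power2_eq_square)

lemma capped_inverse_size_bounds: "0 \<le> capped_inverse_size s E v" "capped_inverse_size s E v \<le> 1"
  by (auto simp: capped_inverse_size_def divide_le_eq_1)

lemma sum_capped_inverse_size_bounds:
  assumes "is_graph n E" "0 < s"
  shows "(\<Sum>v<n. capped_inverse_size s E v) \<le> real (num_components n E)"
    and "real (num_components n E) - real n / real s \<le> (\<Sum>v<n. capped_inverse_size s E v)"
proof -
  let ?w = "\<lambda>v. 1 / real (card (component E v))"
  have "capped_inverse_size s E v \<le> ?w v" for v
    by (simp add: capped_inverse_size_def)
  then show "(\<Sum>v<n. capped_inverse_size s E v) \<le> real (num_components n E)"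
    unfolding sum_inverse_card_component[OF assms(1), symmetric] by (rule sum_mono)
  have "?w v - capped_inverse_size s E v \<le> 1 / real s" for v
    using assms(2) by (auto simp: capped_inverse_size_def frac_le)
  then have "(\<Sum>v<n. ?w v - capped_inverse_size s E v) \<le> real n / real s"
    using sum_mono[of "{..<n}" _ "\<lambda>_. 1 / real s"] by simp
  then show "real (num_components n E) - real n / real s \<le> (\<Sum>v<n. capped_inverse_size s E v)"
    unfolding sum_inverse_card_component[OF assms(1), symmetric] sum_subtractf by simp
qed

lemma sum_square_sample_sums:
  fixes Z :: "'a \<Rightarrow> real"
  assumes "finite V" "(\<Sum>v\<in>V. Z v) = 0" "\<And>v. v \<in> V \<Longrightarrow> \<bar>Z v\<bar> \<le> 1"
  shows "(\<Sum>xs | set xs \<subseteq> V \<and> length xs = r. (\<Sum>z\<leftarrow>xs. Z z)\<^sup>2) \<le> real r * real (card V) ^ r"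
proof (induction r)
  case 0
  have "{xs. set xs \<subseteq> V \<and> length xs = 0} = {[]}" by auto
  then show ?case by simp
next
  case (Suc r)
  let ?L = "{xs. set xs \<subseteq> V \<and> length xs = r}"
  let ?S = "\<lambda>xs. \<Sum>z\<leftarrow>xs. Z z"
  have cross: "(\<Sum>x\<in>V. \<Sum>xs\<in>?L. 2 * Z x * ?S xs) = 0"
  proof -
    have "(\<Sum>xs\<in>?L. 2 * Z x * ?S xs) = Z x * (2 * (\<Sum>xs\<in>?L. ?S xs))" for x
      by (simp add: sum_distrib_left mult_ac)
    then show ?thesis by (simp add: sum_distrib_right[symmetric] assms(2))
  qed
  have "{xs. set xs \<subseteq> V \<and> length xs = Suc r} = (\<lambda>(x, xs). x # xs) ` (V \<times> ?L)"
    by (auto simp: length_Suc_conv)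
  then have "(\<Sum>xs | set xs \<subseteq> V \<and> length xs = Suc r. (?S xs)\<^sup>2) =
      (\<Sum>x\<in>V. \<Sum>xs\<in>?L. (Z x + ?S xs)\<^sup>2)"
    by (simp add: sum.reindex inj_on_def sum.cartesian_product case_prod_beta)
  also have "\<dots> = (\<Sum>x\<in>V. \<Sum>xs\<in>?L. (Z x)\<^sup>2) + (\<Sum>x\<in>V. \<Sum>xs\<in>?L. (?S xs)\<^sup>2)"
    using cross by (simp add: power2_sum sum.distrib)
  also have "\<dots> \<le> (\<Sum>x\<in>V. real (card V) ^ r) + (\<Sum>x\<in>V. real r * real (card V) ^ r)"
  proof -
    have "(Z x)\<^sup>2 \<le> 1" if "x \<in> V" for x
      using assms(3)[OF that] by (simp add: abs_square_le_1)
    then have "(\<Sum>xs\<in>?L. (Z x)\<^sup>2) \<le> real (card V) ^ r" if "x \<in> V" for x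
      using that card_lists_length_eq[OF assms(1), of r] by (simp add: mult_left_le)
    then show ?thesis
      using Suc.IH by (intro add_mono sum_mono) auto
  qed
  also have "\<dots> = real (Suc r) * real (card V) ^ Suc r" by (simp add: algebra_simps)
  finally show ?case .
qed

lemma card_large_sample_sums:
  fixes Z :: "'a \<Rightarrow> real"
  assumes "finite V" "(\<Sum>v\<in>V. Z v) = 0" "\<And>v. v \<in> V \<Longrightarrow> \<bar>Z v\<bar> \<le> 1" "0 \<le> a"
  shows "real (card {xs. set xs \<subseteq> V \<and> length xs = r \<and> a \<le> \<bar>\<Sum>z\<leftarrow>xs. Z z\<bar>}) * a\<^sup>2
           \<le> real r * real (card V) ^ r"
proof -
  let ?L = "{xs. set xs \<subseteq> V \<and> length xs = r}"
  let ?B = "{xs. set xs \<subseteq> V \<and> length xs = r \<and> a \<le> \<bar>\<Sum>z\<leftarrow>xs. Z z\<bar>}"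
  have "real (card ?B) * a\<^sup>2 = (\<Sum>xs\<in>?B. a\<^sup>2)" by simp
  also have "\<dots> \<le> (\<Sum>xs\<in>?B. (\<Sum>z\<leftarrow>xs. Z z)\<^sup>2)"
  proof (rule sum_mono)
    fix xs assume "xs \<in> ?B"
    then have "a\<^sup>2 \<le> \<bar>\<Sum>z\<leftarrow>xs. Z z\<bar>\<^sup>2" using assms(4) by (intro power_mono) auto
    then show "a\<^sup>2 \<le> (\<Sum>z\<leftarrow>xs. Z z)\<^sup>2" by simp
  qed
  also have "\<dots> \<le> (\<Sum>xs\<in>?L. (\<Sum>z\<leftarrow>xs. Z z)\<^sup>2)"
    using finite_lists_length_eq[OF assms(1)] by (intro sum_mono2) auto
  also have "\<dots> \<le> real r * real (card V) ^ r"
    by (rule sum_square_sample_sums[OF assms(1-3)])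
  finally show ?thesis .
qed

lemma prob_sample_mean_deviation:
  fixes X :: "'a \<Rightarrow> real"
  assumes "finite V" "V \<noteq> {}" "\<And>v. v \<in> V \<Longrightarrow> 0 \<le> X v \<and> X v \<le> 1" "0 < r" "0 < t"
  shows "measure_pmf.prob (pmf_of_set {xs. set xs \<subseteq> V \<and> length xs = r})
           {xs. t \<le> \<bar>(\<Sum>x\<leftarrow>xs. X x) / real r - (\<Sum>v\<in>V. X v) / real (card V)\<bar>}
         \<le> 1 / (real r * t\<^sup>2)"
proof -
  let ?L = "{xs. set xs \<subseteq> V \<and> length xs = r}"
  define \<mu> where "\<mu> = (\<Sum>v\<in>V. X v) / real (card V)"
  define Z where "Z v = X v - \<mu>" for v
  have cardV: "0 < card V" using assms(1,2) by (simp add: card_gt_0_iff)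
  have "0 \<le> \<mu>" "\<mu> \<le> 1"
    using assms(3) sum_mono[of V X "\<lambda>_. 1"] cardV by (auto simp: \<mu>_def sum_nonneg divide_le_eq_1)
  then have Zb: "\<bar>Z v\<bar> \<le> 1" if "v \<in> V" for v using assms(3)[OF that] by (auto simp: Z_def)
  have Zs: "(\<Sum>v\<in>V. Z v) = 0" using cardV by (simp add: Z_def \<mu>_def sum_subtractf)
  have sum_Z: "(\<Sum>z\<leftarrow>xs. Z z) = (\<Sum>x\<leftarrow>xs. X x) - real (length xs) * \<mu>" for xs
    by (induction xs) (auto simp: Z_def algebra_simps)
  have "t \<le> \<bar>(\<Sum>x\<leftarrow>xs. X x) / real r - \<mu>\<bar> \<longleftrightarrow> real r * t \<le> \<bar>\<Sum>z\<leftarrow>xs. Z z\<bar>"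
    if "length xs = r" for xs
  proof -
    have "(\<Sum>z\<leftarrow>xs. Z z) = real r * ((\<Sum>x\<leftarrow>xs. X x) / real r - \<mu>)"
      unfolding sum_Z using that assms(4) by (simp add: field_simps)
    then show ?thesis using assms(4) by (simp add: abs_mult)
  qed
  then have "?L \<inter> {xs. t \<le> \<bar>(\<Sum>x\<leftarrow>xs. X x) / real r - \<mu>\<bar>} =
      {xs. set xs \<subseteq> V \<and> length xs = r \<and> real r * t \<le> \<bar>\<Sum>z\<leftarrow>xs. Z z\<bar>}"
    by auto
  moreover have "?L \<noteq> {}"
    using assms(2) by (auto intro!: exI[of _ "replicate r (SOME v. v \<in> V)"] simp: some_in_eq)
  moreover have "real (card {xs. set xs \<subseteq> V \<and> length xs = r \<and> real r * t \<le> \<bar>\<Sum>z\<leftarrow>xs. Z z\<bar>})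
      / real (card V) ^ r \<le> 1 / (real r * t\<^sup>2)"
    using card_large_sample_sums[OF assms(1) Zs Zb, of "real r * t" r] assms(4,5) cardV
    by (simp add: field_simps power2_eq_square)
  ultimately show ?thesis
    using finite_lists_length_eq[OF assms(1)]
    by (simp add: measure_pmf_of_set card_lists_length_eq[OF assms(1)] \<mu>_def)
qed

lemma prob_mono_on_set_pmf:
  assumes "\<And>x. x \<in> set_pmf p \<Longrightarrow> x \<in> A \<Longrightarrow> x \<in> B"
  shows "measure_pmf.prob p A \<le> measure_pmf.prob p B"
proof -
  have "measure_pmf.prob p A = measure_pmf.prob p (A \<inter> set_pmf p)"
    by (rule measure_Int_set_pmf[symmetric])
  also have "\<dots> \<le> measure_pmf.prob p B"
    using assms by (intro measure_pmf.finite_measure_mono) auto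
  finally show ?thesis .
qed

lemma prob_cong_on_set_pmf:
  assumes "\<And>x. x \<in> set_pmf p \<Longrightarrow> x \<in> A \<longleftrightarrow> x \<in> B"
  shows "measure_pmf.prob p A = measure_pmf.prob p B"
  using prob_mono_on_set_pmf[of p A B] prob_mono_on_set_pmf[of p B A] assms by fastforce

lemma prob_ge_one_minus_prob:
  assumes "\<And>x. x \<in> set_pmf p \<Longrightarrow> x \<notin> B \<Longrightarrow> x \<in> A"
  shows "1 - measure_pmf.prob p B \<le> measure_pmf.prob p A"
proof -
  have "1 - measure_pmf.prob p B = measure_pmf.prob p (UNIV - B)"
    using measure_pmf.prob_compl[of B p] by simp
  also have "\<dots> \<le> measure_pmf.prob p A"
    using assms by (intro prob_mono_on_set_pmf) auto
  finally show ?thesis .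
qed

locale conn_tester_setup =
  fixes \<epsilon>\<^sub>1 \<epsilon>\<^sub>2 :: real
  assumes eps1_nonneg: "0 \<le> \<epsilon>\<^sub>1" and eps_less: "\<epsilon>\<^sub>1 < \<epsilon>\<^sub>2"
begin

definition accuracy :: real where
  "accuracy = (\<epsilon>\<^sub>2 - \<epsilon>\<^sub>1) / (4 * (\<epsilon>\<^sub>2 + 2))"

definition size_cap :: nat where
  "size_cap = nat \<lceil>1 / accuracy\<rceil>"

definition num_samples :: nat where
  "num_samples = nat \<lceil>3 / accuracy\<^sup>2\<rceil>"

definition sample_space :: "nat \<Rightarrow> nat list set" where
  "sample_space n = {xs. set xs \<subseteq> {..<n} \<and> length xs = num_samples}"

definition estimate :: "(nat \<Rightarrow> nat list) \<Rightarrow> nat \<Rightarrow> nat list \<Rightarrow> real" where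
  "estimate adj n xs =
     real n * (\<Sum>x\<leftarrow>xs. capped_inverse_size size_cap (adj_edges adj) x) / real num_samples"

definition estimate_test :: "nat \<Rightarrow> nat \<Rightarrow> nat list \<Rightarrow> bool query" where
  "estimate_test n m xs =
     query_bind (query_sum (size_probe size_cap) xs)
       (\<lambda>S. Answer (real n * S / real num_samples - 1 \<le> (\<epsilon>\<^sub>1 + \<epsilon>\<^sub>2) / 2 * real m))"

text \<open>Graphs with more than (eps2 + 1) m + 1 vertices but at most m edges are too far from
  connected and are rejected outright. Otherwise n \<le> (eps2 + 2) m, and accuracy is chosen so
  that both the sampling error n * accuracy and the loss n / size_cap from ignoring components
  larger than size_cap are at most (eps2 - eps1) m / 4.\<close>

definition tester :: "nat \<Rightarrow> nat \<Rightarrow> qtree pmf" where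
  "tester n m =
     (if n = 0 then return_pmf (Halt True)
      else if (\<epsilon>\<^sub>2 + 1) * real m + 1 < real n then return_pmf (Halt False)
      else map_pmf (qtree_of \<circ> estimate_test n m) (pmf_of_set (sample_space n)))"

lemma accuracy_pos: "0 < accuracy"
  using eps1_nonneg eps_less by (simp add: accuracy_def)

lemma size_cap_pos: "0 < size_cap"
  using accuracy_pos by (simp add: size_cap_def)

lemma num_samples_pos: "0 < num_samples"
  using accuracy_pos by (simp add: num_samples_def)

lemma sample_space_nonempty: "0 < n \<Longrightarrow> sample_space n \<noteq> {}"
  by (auto simp: sample_space_def intro!: exI[of _ "replicate num_samples 0"])

lemma finite_sample_space: "finite (sample_space n)"
  unfolding sample_space_def using finite_lists_length_eq[of "{..<n}"] by simp

lemma query_cost_tester: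
  assumes "t \<in> set_pmf (tester n m)"
  shows "snd (run adj t) \<le> num_samples * (size_cap + 1)\<^sup>2"
proof (cases "n = 0 \<or> (\<epsilon>\<^sub>2 + 1) * real m + 1 < real n")
  case False
  then obtain xs where xs: "xs \<in> sample_space n" "t = qtree_of (estimate_test n m xs)"
    using assms sample_space_nonempty finite_sample_space by (auto simp: tester_def)
  have "query_cost adj (query_sum (size_probe size_cap) xs) \<le> length xs * (size_cap + 1)\<^sup>2"
    unfolding query_cost_sum using query_cost_size_probe sum_list_mono[of xs _ "\<lambda>_. (size_cap + 1)\<^sup>2"]
    by (simp add: sum_list_triv)
  then show ?thesis using xs by (simp add: run_qtree_of estimate_test_def sample_space_def)
qed (use assms in \<open>auto simp: tester_def split: if_splits\<close>)

lemma accept_prob_tester: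
  assumes "valid_adj n adj" "0 < n" "\<not> (\<epsilon>\<^sub>2 + 1) * real m + 1 < real n"
  shows "accept_prob (tester n m) adj = measure_pmf.prob (pmf_of_set (sample_space n))
           {xs. estimate adj n xs - 1 \<le> (\<epsilon>\<^sub>1 + \<epsilon>\<^sub>2) / 2 * real m}"
proof -
  have "fst (run adj (qtree_of (estimate_test n m xs))) \<longleftrightarrow> estimate adj n xs - 1 \<le> (\<epsilon>\<^sub>1 + \<epsilon>\<^sub>2) / 2 * real m"
    if "xs \<in> sample_space n" for xs
  proof -
    have "query_result adj (size_probe size_cap x) = capped_inverse_size size_cap (adj_edges adj) x"
      if "x \<in> set xs" for x
      using query_result_size_probe[OF assms(1)] size_cap_pos \<open>xs \<in> sample_space n\<close> that
      by (auto simp: sample_space_def)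
    then show ?thesis
      by (simp add: run_qtree_of estimate_test_def estimate_def query_result_sum cong: map_cong)
  qed
  then show ?thesis
    using assms sample_space_nonempty finite_sample_space
    unfolding accept_prob_def tester_def
    by (auto simp: measure_map_pmf intro!: prob_cong_on_set_pmf)
qed

lemma prob_estimate_deviation:
  assumes "0 < n"
  shows "measure_pmf.prob (pmf_of_set (sample_space n))
           {xs. real n * accuracy \<le> \<bar>estimate adj n xs - (\<Sum>v<n. capped_inverse_size size_cap (adj_edges adj) v)\<bar>}
         \<le> 1 / 3"
proof -
  let ?w = "capped_inverse_size size_cap (adj_edges adj)"
  have "real n * accuracy \<le> \<bar>estimate adj n xs - (\<Sum>v<n. ?w v)\<bar> \<longleftrightarrow>
      accuracy \<le> \<bar>(\<Sum>x\<leftarrow>xs. ?w x) / real num_samples - (\<Sum>v<n. ?w v) / real (card {..<n})\<bar>" for xs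
  proof -
    have "estimate adj n xs - (\<Sum>v<n. ?w v) =
        real n * ((\<Sum>x\<leftarrow>xs. ?w x) / real num_samples - (\<Sum>v<n. ?w v) / real n)"
      using assms by (simp add: estimate_def field_simps)
    then show ?thesis using assms by (simp add: abs_mult)
  qed
  then have "measure_pmf.prob (pmf_of_set (sample_space n))
           {xs. real n * accuracy \<le> \<bar>estimate adj n xs - (\<Sum>v<n. ?w v)\<bar>} =
      measure_pmf.prob (pmf_of_set {xs. set xs \<subseteq> {..<n} \<and> length xs = num_samples})
           {xs. accuracy \<le> \<bar>(\<Sum>x\<leftarrow>xs. ?w x) / real num_samples - (\<Sum>v<n. ?w v) / real (card {..<n})\<bar>}"
    by (simp add: sample_space_def)
  also have "\<dots> \<le> 1 / (real num_samples * accuracy\<^sup>2)"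
    using assms num_samples_pos accuracy_pos capped_inverse_size_bounds
    by (intro prob_sample_mean_deviation) auto
  also have "\<dots> \<le> 1 / 3"
  proof -
    have "3 / accuracy\<^sup>2 \<le> real num_samples"
      unfolding num_samples_def by linarith
    then show ?thesis
      using accuracy_pos by (simp add: divide_le_eq)
  qed
  finally show ?thesis .
qed

lemma sampling_error_le:
  assumes "0 < m" "\<not> (\<epsilon>\<^sub>2 + 1) * real m + 1 < real n"
  shows "real n * accuracy \<le> (\<epsilon>\<^sub>2 - \<epsilon>\<^sub>1) * real m / 4"
proof -
  have "real n \<le> (\<epsilon>\<^sub>2 + 2) * real m" using assms by (simp add: algebra_simps)
  then have "real n * accuracy \<le> (\<epsilon>\<^sub>2 + 2) * real m * accuracy"
    using accuracy_pos by (simp add: mult_right_mono)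
  also have "\<dots> = (\<epsilon>\<^sub>2 - \<epsilon>\<^sub>1) * real m / 4"
    using eps1_nonneg eps_less by (simp add: accuracy_def field_simps)
  finally show ?thesis .
qed

lemma inverse_size_cap_le_accuracy: "1 / real size_cap \<le> accuracy"
proof -
  have "1 / accuracy \<le> real size_cap" unfolding size_cap_def by linarith
  then show ?thesis using accuracy_pos size_cap_pos by (simp add: divide_le_eq mult.commute)
qed

lemma tester_correct_main_case:
  assumes "valid_adj n adj" "0 < m" "0 < n"
    and small: "\<not> (\<epsilon>\<^sub>2 + 1) * real m + 1 < real n"
  shows "close_to_conn n m \<epsilon>\<^sub>1 (adj_edges adj) \<Longrightarrow> 2 / 3 \<le> accept_prob (tester n m) adj"
    and "\<not> close_to_conn n m \<epsilon>\<^sub>2 (adj_edges adj) \<Longrightarrow> accept_prob (tester n m) adj \<le> 1 / 3"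
proof -
  let ?E = "adj_edges adj"
  let ?k = "real (num_components n ?E)"
  let ?A = "\<Sum>v<n. capped_inverse_size size_cap ?E v"
  let ?p = "pmf_of_set (sample_space n)"
  let ?accept = "{xs. estimate adj n xs - 1 \<le> (\<epsilon>\<^sub>1 + \<epsilon>\<^sub>2) / 2 * real m}"
  let ?bad = "{xs. real n * accuracy \<le> \<bar>estimate adj n xs - ?A\<bar>}"
  have G: "is_graph n ?E" using assms(1) by (rule is_graph_adj_edges)
  have A: "?A \<le> ?k" "?k - real n / real size_cap \<le> ?A"
    using sum_capped_inverse_size_bounds[OF G size_cap_pos] by auto
  have err: "real n * accuracy \<le> (\<epsilon>\<^sub>2 - \<epsilon>\<^sub>1) * real m / 4"
    using sampling_error_le[OF assms(2) small] .
  have cap: "real n / real size_cap \<le> real n * accuracy"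
    using mult_left_mono[OF inverse_size_cap_le_accuracy, of "real n"] by simp
  have prob_bad: "measure_pmf.prob ?p ?bad \<le> 1 / 3"
    using prob_estimate_deviation[OF assms(3)] by simp
  have accept: "accept_prob (tester n m) adj = measure_pmf.prob ?p ?accept"
    using accept_prob_tester[OF assms(1,3) small] .
  show "2 / 3 \<le> accept_prob (tester n m) adj" if "close_to_conn n m \<epsilon>\<^sub>1 ?E"
  proof -
    have "?k - 1 \<le> \<epsilon>\<^sub>1 * real m"
      using that close_to_conn_iff_num_components[OF G assms(3,2)] by simp
    then have "xs \<in> ?accept" if "xs \<notin> ?bad" for xs
      using that A err by (auto simp: field_simps)
    then have "1 - measure_pmf.prob ?p ?bad \<le> measure_pmf.prob ?p ?accept"
      by (intro prob_ge_one_minus_prob)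
    then show ?thesis using accept prob_bad by linarith
  qed
  show "accept_prob (tester n m) adj \<le> 1 / 3" if "\<not> close_to_conn n m \<epsilon>\<^sub>2 ?E"
  proof -
    have "\<epsilon>\<^sub>2 * real m < ?k - 1"
      using that close_to_conn_iff_num_components[OF G assms(3,2)] by simp
    then have "xs \<in> ?bad" if "xs \<in> ?accept" for xs
      using that A err cap by (auto simp: field_simps)
    then have "measure_pmf.prob ?p ?accept \<le> measure_pmf.prob ?p ?bad"
      by (intro prob_mono_on_set_pmf)
    then show ?thesis using accept prob_bad by linarith
  qed
qed

lemma tester_correct:
  assumes "valid_adj n adj" "card (adj_edges adj) \<le> m" "0 < m"
  shows "(close_to_conn n m \<epsilon>\<^sub>1 (adj_edges adj) \<longrightarrow> 2 / 3 \<le> accept_prob (tester n m) adj) \<and>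
    (\<not> close_to_conn n m \<epsilon>\<^sub>2 (adj_edges adj) \<longrightarrow> accept_prob (tester n m) adj \<le> 1 / 3)"
proof -
  have G: "is_graph n (adj_edges adj)" using assms(1) by (rule is_graph_adj_edges)
  consider "n = 0" | "0 < n" "(\<epsilon>\<^sub>2 + 1) * real m + 1 < real n"
    | "0 < n" "\<not> (\<epsilon>\<^sub>2 + 1) * real m + 1 < real n"
    by linarith
  then show ?thesis
  proof cases
    case 1
    then show ?thesis
      using close_to_conn_no_vertices G eps1_nonneg eps_less by (simp add: tester_def accept_prob_def)
  next
    case 2
    moreover have "(\<epsilon>\<^sub>1 + 1) * real m \<le> (\<epsilon>\<^sub>2 + 1) * real m"
      using eps_less by (simp add: mult_right_mono)
    ultimately show ?thesis
      using not_close_to_conn_many_vertices[OF G assms(2,3)] eps1_nonneg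
      by (simp add: tester_def accept_prob_def)
  next
    case 3
    then show ?thesis using tester_correct_main_case[OF assms(1,3)] by blast
  qed
qed

lemma tester_tolerant:
  "tolerant_conn_tester \<epsilon>\<^sub>1 \<epsilon>\<^sub>2 tester (\<lambda>_ _. num_samples * (size_cap + 1)\<^sup>2)"
  unfolding tolerant_conn_tester_def
proof (intro conjI allI impI)
  fix c \<delta> :: real assume "0 < \<delta>"
  let ?Q = "real (num_samples * (size_cap + 1)\<^sup>2)"
  have "?Q \<le> \<delta> * real m" if "nat \<lceil>?Q / \<delta>\<rceil> \<le> m" for m
    using that \<open>0 < \<delta>\<close> by (simp add: divide_le_eq mult.commute)
  then show "\<exists>M. \<forall>n m. M \<le> m \<longrightarrow> c * real n \<le> real m \<longrightarrow> ?Q \<le> \<delta> * real m"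
    by blast
qed (use query_cost_tester tester_correct in blast)+

end

theorem tolerant_conn_tester_exists:
  assumes "0 \<le> \<epsilon>\<^sub>1" "\<epsilon>\<^sub>1 < \<epsilon>\<^sub>2"
  shows "\<exists>T q. tolerant_conn_tester \<epsilon>\<^sub>1 \<epsilon>\<^sub>2 T q"
proof -
  interpret conn_tester_setup \<epsilon>\<^sub>1 \<epsilon>\<^sub>2 using assms by unfold_locales
  show ?thesis using tester_tolerant by blast
qed

theorem mainTheorem4:
  fixes \<alpha> \<beta> \<epsilon> :: real
  assumes "\<alpha> > 0" and "\<beta> > 0" and "\<epsilon> > 0"
  shows "\<exists>T q. tolerant_conn_tester \<epsilon> ((1 + \<alpha>) * \<epsilon> + \<beta>) T q"
  using assms by (intro tolerant_conn_tester_exists) (auto simp: algebra_simps intro!: add_pos_pos)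

end
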